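(* (dS shift.) Consider the single-fluid shifted system with $\sigma>0$, and let $t_{\mathrm b},\xi_{\mathrm b},\xi_0,t_0$ be as in the time-interval setup, with $\sigma<h(t_{\mathrm b})^2$, and $b:=\max_{t\in[t_{\mathrm b},t_0]}\sqrt2\,|y_{\mathrm i}(t)|h(t)/l>0$. Then $$\Delta t_{\mathrm b0}\ \ge\ \frac{1}{2\sqrt{2\xi_0}}\,\frac{1}{b\,c\,l}\,\frac{\xi_0-\xi_{\mathrm b}}{\sqrt{1-\sigma/h(t_{\mathrm b})^2}}.$$
   Context: Shifted single-fluid system. Fix real constants $c>0$, $l>0$, $w\in[-1,1]$ and $\sigma\in\mathbb{R}$. Let $I\subseteq\mathbb R$ be an interval and $x,y_{\mathrm r},y_{\mathrm i},z,h$ real $C^1$ functions on $I$ with $h>0$, $z\ge0$. Define $\xi=x^2+\frac{1+w}{2}z^2$. Assume on $I$: $\dot x=[-x+4c\,y_{\mathrm r}y_{\mathrm i}+x\xi]h$, $\dot y_{\mathrm r}=[\xi y_{\mathrm r}-c\,x\,y_{\mathrm i}]h$, $\dot y_{\mathrm i}=[\xi y_{\mathrm i}+c\,x\,y_{\mathrm r}]h$, $\dot z=[-\frac{1+w}{2}+\xi]zh$, $\dot h=-\xi h^2$, with constraints $x^2+4y_{\mathrm r}^2+z^2=1-\sigma/h^2$ and $y_{\mathrm r}^2+y_{\mathrm i}^2=\frac{l^2}{2h^2}$. (Here $\sigma=L^2$ encodes a cosmological constant $\Lambda$ added to the cosine potential, of the sign of $\Lambda$.) Time-interval setup: let $t_{\mathrm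 b}\in I$, $\xi_{\mathrm b}:=\xi(t_{\mathrm b})$, and let $\xi_0$ be a real number with $\xi_0>0$ and $\xi_{\mathrm b}\le\xi_0\le\frac{1+w}{2}$. Assume the set $\{t\in I:\ t\ge t_{\mathrm b},\ \xi(t)=\xi_0\}$ is nonempty and let $t_0$ be its minimum (so $\xi(t)\le\xi_0$ for all $t\in[t_{\mathrm b},t_0]$); put $\Delta t_{\mathrm b0}=t_0-t_{\mathrm b}$. *)

theory Defs
  imports "HOL-Analysis.Analysis"
begin

definition xi_fun :: "real \<Rightarrow> (real \<Rightarrow> real) \<Rightarrow> (real \<Rightarrow> real) \<Rightarrow> real \<Rightarrow> real" where
  "xi_fun w x z t = (x t)^2 + (1 + w) / 2 * (z t)^2"

definition shifted_single_fluid ::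
  "real \<Rightarrow> real \<Rightarrow> real \<Rightarrow> real \<Rightarrow> real set \<Rightarrow>
   (real \<Rightarrow> real) \<Rightarrow> (real \<Rightarrow> real) \<Rightarrow> (real \<Rightarrow> real) \<Rightarrow> (real \<Rightarrow> real) \<Rightarrow> (real \<Rightarrow> real) \<Rightarrow> bool" where
  "shifted_single_fluid c l w \<sigma> I x yr yi z h \<longleftrightarrow>
     c > 0 \<and> l > 0 \<and> -1 \<le> w \<and> w \<le> 1 \<and> is_interval I \<and>
     (\<forall>f\<in>{x, yr, yi, z, h}. \<exists>f'. continuous_on I f' \<and>
         (\<forall>t\<in>I. (f has_real_derivative f' t) (at t within I))) \<and>
     (\<forall>t\<in>I. h t > 0 \<and> z t \<ge> 0) \<and>
     (\<forall>t\<in>I.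
        (x has_real_derivative
            (- x t + 4 * c * yr t * yi t + x t * xi_fun w x z t) * h t) (at t within I) \<and>
        (yr has_real_derivative
            (xi_fun w x z t * yr t - c * x t * yi t) * h t) (at t within I) \<and>
        (yi has_real_derivative
            (xi_fun w x z t * yi t + c * x t * yr t) * h t) (at t within I) \<and>
        (z has_real_derivative
            (- (1 + w) / 2 + xi_fun w x z t) * z t * h t) (at t within I) \<and>
        (h has_real_derivative - xi_fun w x z t * (h t)^2) (at t within I) \<and>
        (x t)^2 + 4 * (yr t)^2 + (z t)^2 = 1 - \<sigma> / (h t)^2 \<and>
        (yr t)^2 + (yi t)^2 = l^2 / (2 * (h t)^2))"

end

theory Submission
  imports Defs
begin

text \<open>Along the flow, \<open>\<xi>' = h (2\<xi>\<^sup>2 - 2x\<^sup>2 - 2a\<^sup>2z\<^sup>2 + 8c x y\<^sub>r y\<^sub>i)\<close> with \<open>a = (1+w)/2\<close>.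
  Since \<open>x\<^sup>2 + z\<^sup>2 \<le> 1\<close> when \<open>\<sigma> \<ge> 0\<close>, the quadratic part is nonpositive, so \<open>\<xi>'\<close> is at most
  \<open>8c |x| |y\<^sub>r| |y\<^sub>i h|\<close>. Up to the first time \<open>t\<^sub>0\<close> at which \<open>\<xi>\<close> reaches \<open>\<xi>\<^sub>0\<close> we have
  \<open>|x| \<le> \<surd>\<xi>\<^sub>0\<close>; as \<open>h\<close> decreases, the first constraint gives
  \<open>4y\<^sub>r\<^sup>2 \<le> 1 - \<sigma>/h(t\<^sub>b)\<^sup>2\<close>; and \<open>|y\<^sub>i h| \<le> b l/\<surd>2\<close> by definition of \<open>b\<close>.
  The mean value theorem turns this bound on \<open>\<xi>'\<close> into a lower bound on \<open>t\<^sub>0 - t\<^sub>b\<close>.\<close>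

lemma weighted_sum_squares_sq_le:
  fixes X Z a :: real
  assumes "0 \<le> a" "a \<le> 1" "X\<^sup>2 + Z\<^sup>2 \<le> 1"
  shows "(X\<^sup>2 + a * Z\<^sup>2)\<^sup>2 \<le> X\<^sup>2 + a\<^sup>2 * Z\<^sup>2"
proof -
  have "(X\<^sup>2 + a * Z\<^sup>2)\<^sup>2 = (X\<^sup>2 + Z\<^sup>2) * (X\<^sup>2 + a\<^sup>2 * Z\<^sup>2) - X\<^sup>2 * Z\<^sup>2 * (1 - a)\<^sup>2"
    by (simp add: power2_eq_square algebra_simps)
  also have "\<dots> \<le> (X\<^sup>2 + Z\<^sup>2) * (X\<^sup>2 + a\<^sup>2 * Z\<^sup>2)"
    by simp
  also have "\<dots> \<le> X\<^sup>2 + a\<^sup>2 * Z\<^sup>2"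
    using mult_right_mono[OF assms(3), of "X\<^sup>2 + a\<^sup>2 * Z\<^sup>2"] by simp
  finally show ?thesis .
qed

lemma increment_le_of_derivative_le:
  fixes f f' :: "real \<Rightarrow> real"
  assumes "a \<le> b"
    and "\<And>t. t \<in> {a..b} \<Longrightarrow> (f has_real_derivative f' t) (at t within {a..b})"
    and "\<And>t. t \<in> {a..b} \<Longrightarrow> f' t \<le> K"
  shows "f b - f a \<le> K * (b - a)"
proof -
  obtain u where u: "u \<in> {a..b}" "f b - f a = f' u * (b - a)"
    using mvt_very_simple[of a b f "\<lambda>t d. f' t * d"] assms(1,2)
    by (auto simp: has_field_derivative_imp_has_derivative)
  then show ?thesis
    using assms(1,3) by (simp add: mult_right_mono)
qed

lemma le_before_first_crossing:
  fixes f :: "real \<Rightarrow> real"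
  assumes "continuous_on {a..b} f" "f a \<le> v"
    and "\<And>t. t \<in> {a..<b} \<Longrightarrow> f t \<noteq> v" "f b = v"
    and "t \<in> {a..b}"
  shows "f t \<le> v"
proof (rule ccontr)
  assume "\<not> f t \<le> v"
  moreover have "continuous_on {a..t} f"
    using assms(1,5) by (auto intro: continuous_on_subset)
  ultimately obtain s where s: "a \<le> s" "s \<le> t" "f s = v"
    using IVT'[of f a v t] assms(2,5) by auto
  have "s < b"
  proof (rule ccontr)
    assume "\<not> s < b"
    then have "t = b"
      using s(2) assms(5) by auto
    then show False
      using assms(4) \<open>\<not> f t \<le> v\<close> by simp
  qed
  then show False
    using assms(3) s by auto
qed

lemma le_SUP_of_continuous_on_Icc:
  fixes f :: "real \<Rightarrow> real"
  assumes "continuous_on {a..b} f" "t \<in> {a..b}"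
  shows "f t \<le> (SUP s \<in> {a..b}. f s)"
  using assms
  by (intro cSUP_upper bounded_imp_bdd_above compact_imp_bounded compact_continuous_image) auto

locale shifted_single_fluid_solution =
  fixes c l w \<sigma> :: real and I :: "real set" and x yr yi z h :: "real \<Rightarrow> real"
  assumes sys: "shifted_single_fluid c l w \<sigma> I x yr yi z h"
begin

abbreviation \<xi> :: "real \<Rightarrow> real" where
  "\<xi> \<equiv> xi_fun w x z"

definition xi_rate :: "real \<Rightarrow> real" where
  "xi_rate t = h t * (2 * (\<xi> t)\<^sup>2 - 2 * (x t)\<^sup>2 - 2 * ((1 + w) / 2)\<^sup>2 * (z t)\<^sup>2
                      + 8 * c * x t * yr t * yi t)"

lemma c_pos: "c > 0" and l_pos: "l > 0" and w_bounds: "-1 \<le> w" "w \<le> 1"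
  and interval: "is_interval I"
  using sys unfolding shifted_single_fluid_def by auto

lemma h_pos: "t \<in> I \<Longrightarrow> h t > 0"
  using sys unfolding shifted_single_fluid_def by auto

lemma first_constraint: "t \<in> I \<Longrightarrow> (x t)\<^sup>2 + 4 * (yr t)\<^sup>2 + (z t)\<^sup>2 = 1 - \<sigma> / (h t)\<^sup>2"
  using sys unfolding shifted_single_fluid_def by auto

lemma Icc_subset: "s \<in> I \<Longrightarrow> t \<in> I \<Longrightarrow> {s..t} \<subseteq> I"
  using interval unfolding is_interval_1 atLeastAtMost_iff subset_iff by blast

lemma xi_nonneg: "\<xi> t \<ge> 0"
  using w_bounds unfolding xi_fun_def by simp

lemma h_has_derivative: "t \<in> I \<Longrightarrow> (h has_real_derivative - \<xi> t * (h t)\<^sup>2) (at t within I)"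
  using sys unfolding shifted_single_fluid_def by auto

lemma xi_has_derivative:
  assumes "t \<in> I"
  shows "(\<xi> has_real_derivative xi_rate t) (at t within I)"
proof -
  have dx: "(x has_real_derivative (- x t + 4 * c * yr t * yi t + x t * \<xi> t) * h t) (at t within I)"
    and dz: "(z has_real_derivative (- (1 + w) / 2 + \<xi> t) * z t * h t) (at t within I)"
    using sys assms unfolding shifted_single_fluid_def by auto
  have "((\<lambda>t. (x t)\<^sup>2 + (1 + w) / 2 * (z t)\<^sup>2) has_real_derivative xi_rate t) (at t within I)"
    by (auto intro!: derivative_eq_intros dx dz
        simp: xi_rate_def xi_fun_def power2_eq_square field_simps)
  then show ?thesis
    unfolding xi_fun_def[abs_def] .
qed

lemma continuous_on_xi: "continuous_on I \<xi>"
  by (rule DERIV_continuous_on[OF xi_has_derivative])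

lemma continuous_on_h: "continuous_on I h"
  by (rule DERIV_continuous_on[OF h_has_derivative])

lemma continuous_on_yi: "continuous_on I yi"
proof -
  obtain yi' where "\<forall>t\<in>I. (yi has_real_derivative yi' t) (at t within I)"
    using sys unfolding shifted_single_fluid_def by blast
  then show ?thesis
    by (intro DERIV_continuous_on) auto
qed

lemma h_antitone:
  assumes "s \<in> I" "t \<in> I" "s \<le> t"
  shows "h t \<le> h s"
proof -
  have "h t - h s \<le> 0 * (t - s)"
  proof (rule increment_le_of_derivative_le[OF \<open>s \<le> t\<close>])
    fix u assume "u \<in> {s..t}"
    then show "(h has_real_derivative - \<xi> u * (h u)\<^sup>2) (at u within {s..t})"
      using Icc_subset[OF assms(1,2)] by (intro DERIV_subset[OF h_has_derivative]) auto
    show "- \<xi> u * (h u)\<^sup>2 \<le> 0"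
      using xi_nonneg[of u] by simp
  qed
  then show ?thesis by simp
qed

lemma xi_rate_le:
  assumes "\<sigma> \<ge> 0" "t \<in> I"
  shows "xi_rate t \<le> 8 * c * h t * x t * yr t * yi t"
proof -
  have "(x t)\<^sup>2 + (z t)\<^sup>2 \<le> 1"
    using first_constraint[OF assms(2)] divide_nonneg_nonneg[OF assms(1) zero_le_power2[of "h t"]]
      zero_le_power2[of "yr t"] by linarith
  then have "(\<xi> t)\<^sup>2 \<le> (x t)\<^sup>2 + ((1 + w) / 2)\<^sup>2 * (z t)\<^sup>2"
    using weighted_sum_squares_sq_le[of "(1 + w) / 2"] w_bounds unfolding xi_fun_def by simp
  then have "h t * (2 * (\<xi> t)\<^sup>2 - 2 * (x t)\<^sup>2 - 2 * ((1 + w) / 2)\<^sup>2 * (z t)\<^sup>2) \<le> 0"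
    using h_pos[OF assms(2)] by (intro mult_nonneg_nonpos) auto
  then show ?thesis
    unfolding xi_rate_def by (simp add: algebra_simps)
qed

lemma four_yr_sq_le:
  assumes "\<sigma> \<ge> 0" "s \<in> I" "t \<in> I" "s \<le> t"
  shows "4 * (yr t)\<^sup>2 \<le> 1 - \<sigma> / (h s)\<^sup>2"
proof -
  have "(h t)\<^sup>2 \<le> (h s)\<^sup>2"
    using h_antitone[OF assms(2-4)] h_pos[OF assms(3)] by (simp add: power_mono)
  then have "\<sigma> / (h s)\<^sup>2 \<le> \<sigma> / (h t)\<^sup>2"
    using assms(1) h_pos[OF assms(2)] h_pos[OF assms(3)] by (intro divide_left_mono) auto
  then show ?thesis
    using first_constraint[OF assms(3)] zero_le_power2[of "x t"] zero_le_power2[of "z t"]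
    by linarith
qed

lemma xi_rate_bound:
  assumes "\<sigma> \<ge> 0" "s \<in> I" "t \<in> I" "s \<le> t"
    and "\<xi> t \<le> \<xi>0" and "sqrt 2 * \<bar>yi t\<bar> * h t / l \<le> b"
  shows "xi_rate t \<le> 2 * sqrt (2 * \<xi>0) * (b * c * l) * sqrt (1 - \<sigma> / (h s)\<^sup>2)"
proof -
  define S where "S = 1 - \<sigma> / (h s)\<^sup>2"
  have ht: "h t > 0"
    using h_pos[OF assms(3)] .
  have "0 \<le> \<xi>0"
    using xi_nonneg[of t] assms(5) by linarith
  have "0 \<le> S"
    using four_yr_sq_le[OF assms(1-4)] zero_le_power2[of "yr t"] unfolding S_def by linarith
  have x_le: "\<bar>x t\<bar> \<le> sqrt \<xi>0"
  proof -
    have "0 \<le> (1 + w) / 2 * (z t)\<^sup>2"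
      using w_bounds by simp
    then have "(x t)\<^sup>2 \<le> \<xi>0"
      using assms(5) unfolding xi_fun_def by linarith
    then show ?thesis
      using real_le_rsqrt by (metis real_sqrt_abs real_sqrt_le_mono)
  qed
  have yr_le: "\<bar>yr t\<bar> \<le> sqrt S / 2"
  proof -
    have "(2 * \<bar>yr t\<bar>)\<^sup>2 \<le> S"
      using four_yr_sq_le[OF assms(1-4)] unfolding S_def by (simp add: power_mult_distrib)
    then show ?thesis
      using real_le_rsqrt by fastforce
  qed
  have yih_le: "\<bar>yi t * h t\<bar> \<le> b * l / sqrt 2"
    using assms(6) l_pos ht by (simp add: field_simps abs_mult)
  have "xi_rate t \<le> 8 * c * (x t * yr t * (yi t * h t))"
    using xi_rate_le[OF assms(1,3)] by (simp add: algebra_simps)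
  also have "\<dots> \<le> 8 * c * (\<bar>x t\<bar> * \<bar>yr t\<bar> * \<bar>yi t * h t\<bar>)"
    using c_pos by (intro mult_left_mono) (auto simp: abs_mult[symmetric])
  also have "\<dots> \<le> 8 * c * (sqrt \<xi>0 * (sqrt S / 2) * (b * l / sqrt 2))"
    using c_pos x_le yr_le yih_le \<open>0 \<le> \<xi>0\<close> \<open>0 \<le> S\<close>
    by (intro mult_left_mono mult_mono) auto
  also have "\<dots> = 2 * sqrt (2 * \<xi>0) * (b * c * l) * sqrt S"
    by (simp add: real_sqrt_mult field_simps)
  finally show ?thesis
    unfolding S_def .
qed

lemma xi_increment_le:
  assumes "\<sigma> \<ge> 0" "s \<in> I" "t \<in> I" "s \<le> t"
    and "\<And>u. u \<in> {s..t} \<Longrightarrow> \<xi> u \<le> \<xi>0"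
    and "\<And>u. u \<in> {s..t} \<Longrightarrow> sqrt 2 * \<bar>yi u\<bar> * h u / l \<le> b"
  shows "\<xi> t - \<xi> s \<le> 2 * sqrt (2 * \<xi>0) * (b * c * l) * sqrt (1 - \<sigma> / (h s)\<^sup>2) * (t - s)"
proof (rule increment_le_of_derivative_le[OF assms(4)])
  fix u assume u: "u \<in> {s..t}"
  then show "(\<xi> has_real_derivative xi_rate u) (at u within {s..t})"
    using Icc_subset[OF assms(2,3)] by (intro DERIV_subset[OF xi_has_derivative]) auto
  show "xi_rate u \<le> 2 * sqrt (2 * \<xi>0) * (b * c * l) * sqrt (1 - \<sigma> / (h s)\<^sup>2)"
    using Icc_subset[OF assms(2,3)] u
    by (intro xi_rate_bound[OF assms(1,2) _ _ assms(5,6)[OF u]]) auto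
qed

end

theorem mainTheorem5:
  fixes c l w \<sigma> :: real and I :: "real set"
    and x yr yi z h :: "real \<Rightarrow> real"
    and tb t0 \<xi>0 b :: real
  assumes sys: "shifted_single_fluid c l w \<sigma> I x yr yi z h"
    and sigma_pos: "\<sigma> > 0"
    and tb: "tb \<in> I"
    and xi0: "\<xi>0 > 0" "xi_fun w x z tb \<le> \<xi>0" "\<xi>0 \<le> (1 + w) / 2"
    and t0: "t0 \<in> I" "t0 \<ge> tb" "xi_fun w x z t0 = \<xi>0"
    and t0_min: "\<forall>t\<in>I. t \<ge> tb \<and> xi_fun w x z t = \<xi>0 \<longrightarrow> t0 \<le> t"
    and sigma_lt: "\<sigma> < (h tb)^2"
    and b_def: "b = (SUP t \<in> {tb..t0}. sqrt 2 * \<bar>yi t\<bar> * h t / l)"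
    and b_pos: "b > 0"
  shows "t0 - tb \<ge> 1 / (2 * sqrt (2 * \<xi>0)) * (1 / (b * c * l))
            * ((\<xi>0 - xi_fun w x z tb) / sqrt (1 - \<sigma> / (h tb)^2))"
proof -
  interpret shifted_single_fluid_solution c l w \<sigma> I x yr yi z h
    by unfold_locales (rule sys)
  define K where "K = 2 * sqrt (2 * \<xi>0) * (b * c * l) * sqrt (1 - \<sigma> / (h tb)\<^sup>2)"
  have sub: "{tb..t0} \<subseteq> I"
    using Icc_subset[OF tb t0(1)] .
  have xi_le: "\<xi> t \<le> \<xi>0" if "t \<in> {tb..t0}" for t
  proof (rule le_before_first_crossing[OF continuous_on_subset[OF continuous_on_xi sub] xi0(2)])
    show "\<xi> s \<noteq> \<xi>0" if "s \<in> {tb..<t0}" for s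
      using t0_min subsetD[OF sub, of s] that by force
  qed (use t0(3) that in auto)
  have "continuous_on {tb..t0} (\<lambda>t. sqrt 2 * \<bar>yi t\<bar> * h t / l)"
    using continuous_on_subset[OF continuous_on_yi sub] continuous_on_subset[OF continuous_on_h sub]
    by (intro continuous_intros) (use l_pos in auto)
  then have b_upper: "sqrt 2 * \<bar>yi t\<bar> * h t / l \<le> b" if "t \<in> {tb..t0}" for t
    unfolding b_def using that by (rule le_SUP_of_continuous_on_Icc)
  have "\<xi>0 - \<xi> tb \<le> K * (t0 - tb)"
    using xi_increment_le[OF _ tb t0(1,2) xi_le b_upper] sigma_pos t0(3)
    unfolding K_def by simp
  moreover have "K > 0"
    using sigma_lt h_pos[OF tb] xi0(1) b_pos c_pos l_pos unfolding K_def by simp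
  ultimately have "(\<xi>0 - \<xi> tb) / K \<le> t0 - tb"
    by (simp add: pos_divide_le_eq mult.commute)
  then show ?thesis
    unfolding K_def by simp
qed

end
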